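(* Let $(A^1,B^1)$ be an $n_1\times m_1$ bimatrix game and $(A^2,B^2)$ an $n_2\times m_2$ bimatrix game, and let $(A,B)=(A^1,B^1)\times(A^2,B^2)$ be their product game. If $(x,y)$ is a Nash equilibrium of $(A,B)$, then $(x^1,y^1)$ defined by $x^1_i=\sum_{l=1}^{n_2}x_{[i,l]}$ for $1\le i\le n_1$ and $y^1_j=\sum_{l=1}^{m_2}y_{[j,l]}$ for $1\le j\le m_1$ is a Nash equilibrium of $(A^1,B^1)$.
   Context: An $n\times m$ bimatrix game $(A,B)$ consists of two real $n\times m$ matrices. A mixed strategy of the row player is a probability vector $x\in\Delta_n=\{x\in\mathbb{R}^n_{\ge 0}:\sum_i x_i=1\}$, of the column player $y\in\Delta_m$; the expected payoffs are $x^TAy$ (row player) and $x^TBy$ (column player). $(x,y)$ is a Nash equilibrium if $x^TAy\ge \hat x^TAy$ for all $\hat x\in\Delta_n$ and $x^TBy\ge x^TB\hat y$ for all $\hat y\in\Delta_m$. For index ranges $\{1,\dots,p\}\times\{1,\dots,q\}$, the pairing $[i,j]=(i-1)q+j$ is the standard bijection onto $\{1,\dots,pq\}$. The product game $(A^1,B^1)\times(A^2,B^2)$ of an $n_1\times m_1$ game and an $n_2\times m_2$ game is the $(n_1n_2)\times(m_1m_2)$ game $(A,B)$ with $A_{[i_1,i_2],[j_1,j_2]}=A^1_{i_1j_1}+A^2_{i_2j_2}$ and $B_{[i_1,i_2],[j_1,j_2]}=B^1_{i_1j_1}+B^2_{i_2j_2}$ (rows indexed via the pairing on $\{1..n_1\}\times\{1..n_2\}$,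 columns via the pairing on $\{1..m_1\}\times\{1..m_2\}$). *)

theory Defs
  imports "HOL-Analysis.Analysis"
begin

text \<open>Matrices and vectors are functions on natural numbers, indexed from 1:
  an n x m matrix is M :: nat => nat => real with entries M i j for 1 <= i <= n, 1 <= j <= m;
  a vector in R^n is x :: nat => real with entries x i for 1 <= i <= n.\<close>

definition mixed_strats :: "nat \<Rightarrow> (nat \<Rightarrow> real) set" where
  "mixed_strats n = {x. (\<forall>i\<in>{1..n}. x i \<ge> 0) \<and> (\<Sum>i=1..n. x i) = 1}"

definition bilin :: "nat \<Rightarrow> nat \<Rightarrow> (nat \<Rightarrow> real) \<Rightarrow> (nat \<Rightarrow> nat \<Rightarrow> real) \<Rightarrow> (nat \<Rightarrow> real) \<Rightarrow> real" where
  "bilin n m x M y = (\<Sum>i=1..n. \<Sum>j=1..m. x i * M i j * y j)"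

definition nash_eq :: "nat \<Rightarrow> nat \<Rightarrow> (nat \<Rightarrow> nat \<Rightarrow> real) \<Rightarrow> (nat \<Rightarrow> nat \<Rightarrow> real)
    \<Rightarrow> (nat \<Rightarrow> real) \<Rightarrow> (nat \<Rightarrow> real) \<Rightarrow> bool" where
  "nash_eq n m A B x y \<longleftrightarrow> x \<in> mixed_strats n \<and> y \<in> mixed_strats m \<and>
     (\<forall>x'\<in>mixed_strats n. bilin n m x A y \<ge> bilin n m x' A y) \<and>
     (\<forall>y'\<in>mixed_strats m. bilin n m x B y \<ge> bilin n m x B y')"

text \<open>Standard pairing [i,j] = (i-1)q + j of {1..p} x {1..q} onto {1..pq}.\<close>
definition pairing :: "nat \<Rightarrow> nat \<Rightarrow> nat \<Rightarrow> nat" where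
  "pairing q i j = (i - 1) * q + j"

definition is_product_game :: "nat \<Rightarrow> nat \<Rightarrow> nat \<Rightarrow> nat
    \<Rightarrow> (nat \<Rightarrow> nat \<Rightarrow> real) \<Rightarrow> (nat \<Rightarrow> nat \<Rightarrow> real)
    \<Rightarrow> (nat \<Rightarrow> nat \<Rightarrow> real) \<Rightarrow> (nat \<Rightarrow> nat \<Rightarrow> real)
    \<Rightarrow> (nat \<Rightarrow> nat \<Rightarrow> real) \<Rightarrow> (nat \<Rightarrow> nat \<Rightarrow> real) \<Rightarrow> bool" where
  "is_product_game n1 m1 n2 m2 A1 B1 A2 B2 A B \<longleftrightarrow>
     (\<forall>i1\<in>{1..n1}. \<forall>i2\<in>{1..n2}. \<forall>j1\<in>{1..m1}. \<forall>j2\<in>{1..m2}.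
        A (pairing n2 i1 i2) (pairing m2 j1 j2) = A1 i1 j1 + A2 i2 j2 \<and>
        B (pairing n2 i1 i2) (pairing m2 j1 j2) = B1 i1 j1 + B2 i2 j2)"

end

theory Submission
  imports Defs
begin

text \<open>The payoff of (x, y) in a product game splits as the payoff of the first marginals in
  the first game plus the payoff of the second marginals in the second game. A deviation u of
  the row player in the first game lifts to the product strategy of u with the second marginal
  of x: its first marginal is u, its second marginal is unchanged, so only the first summand
  changes and optimality of x in the product game yields optimality of its first marginal.
  The column player is symmetric.\<close>

lemma sum_pairing:
  "(\<Sum>r=1..p*q. f r) = (\<Sum>i=1..p. \<Sum>l=1..q. f (pairing q i l))"
proof (induction p)
  case 0
  then show ?case by simp
next
  case (Suc p)
  have "{1..Suc p * q} = {1..p*q} \<union> {p*q+1..p*q+q}" by auto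
  then have "(\<Sum>r=1..Suc p * q. f r) = (\<Sum>r=1..p*q. f r) + (\<Sum>r=p*q+1..p*q+q. f r)"
    by (simp add: sum.union_disjoint)
  also have "(\<Sum>r=p*q+1..p*q+q. f r) = (\<Sum>l=1..q. f (p*q + l))"
    using sum.shift_bounds_cl_nat_ivl[of f 1 "p*q" q] by (simp add: ac_simps)
  finally show ?case using Suc by (simp add: pairing_def)
qed

lemma pairing_mem:
  assumes "i \<in> {1..p}" "l \<in> {1..q}"
  shows "pairing q i l \<in> {1..p * q}"
proof -
  have "(i - 1) * q + l \<le> (i - 1) * q + q" using assms by simp
  also have "\<dots> = i * q" using assms by (cases i) auto
  also have "\<dots> \<le> p * q" using assms by simp
  finally show ?thesis using assms by (simp add: pairing_def)
qed

definition row_marginal :: "nat \<Rightarrow> (nat \<Rightarrow> real) \<Rightarrow> nat \<Rightarrow> real" where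
  "row_marginal q x = (\<lambda>i. \<Sum>l=1..q. x (pairing q i l))"

definition col_marginal :: "nat \<Rightarrow> nat \<Rightarrow> (nat \<Rightarrow> real) \<Rightarrow> nat \<Rightarrow> real" where
  "col_marginal p q x = (\<lambda>l. \<Sum>i=1..p. x (pairing q i l))"

lemma row_marginal_mixed:
  assumes "x \<in> mixed_strats (p * q)"
  shows "row_marginal q x \<in> mixed_strats p"
  using assms pairing_mem sum_pairing[of x p q]
  by (auto simp: mixed_strats_def row_marginal_def intro!: sum_nonneg)

lemma col_marginal_mixed:
  assumes "x \<in> mixed_strats (p * q)"
  shows "col_marginal p q x \<in> mixed_strats q"
  using assms pairing_mem sum_pairing[of x p q]
    sum.swap[where g="\<lambda>i l. x (pairing q i l)" and A="{1..p}" and B="{1..q}"]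
  by (auto simp: mixed_strats_def col_marginal_def intro!: sum_nonneg)

lemma sum_pairing_separable:
  "(\<Sum>i=1..p. \<Sum>l=1..q. x (pairing q i l) * (a i + b l))
     = (\<Sum>i=1..p. row_marginal q x i * a i) + (\<Sum>l=1..q. col_marginal p q x l * b l)"
proof -
  have "(\<Sum>i=1..p. \<Sum>l=1..q. x (pairing q i l) * b l)
      = (\<Sum>l=1..q. \<Sum>i=1..p. x (pairing q i l) * b l)"
    by (rule sum.swap)
  then show ?thesis
    by (simp add: row_marginal_def col_marginal_def distrib_left sum.distrib sum_distrib_right)
qed

text \<open>The product distribution of u and v, written through the inverse of the pairing.\<close>
definition product_strategy :: "nat \<Rightarrow> (nat \<Rightarrow> real) \<Rightarrow> (nat \<Rightarrow> real) \<Rightarrow> nat \<Rightarrow> real" where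
  "product_strategy q u v r = u ((r - 1) div q + 1) * v ((r - 1) mod q + 1)"

lemma product_strategy_pairing:
  assumes "1 \<le> i" "l \<in> {1..q}"
  shows "product_strategy q u v (pairing q i l) = u i * v l"
proof -
  obtain i' l' where "i = Suc i'" "l = Suc l'" "l' < q"
    using assms by (cases i; cases l) auto
  then show ?thesis by (simp add: product_strategy_def pairing_def)
qed

lemma product_strategy_mixed:
  assumes u: "u \<in> mixed_strats p" and v: "v \<in> mixed_strats q"
  shows "product_strategy q u v \<in> mixed_strats (p * q)"
proof -
  have "product_strategy q u v r \<ge> 0" if "r \<in> {1..p * q}" for r
  proof -
    have "q > 0" using that by (cases q) auto
    then have "(r - 1) div q + 1 \<in> {1..p}" "(r - 1) mod q + 1 \<in> {1..q}"
      using that by (auto simp: less_mult_imp_div_less Suc_leI)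
    then show ?thesis
      using u v by (simp add: mixed_strats_def product_strategy_def)
  qed
  moreover have "(\<Sum>r=1..p * q. product_strategy q u v r) = 1"
    using u v unfolding sum_pairing
    by (simp add: product_strategy_pairing mixed_strats_def flip: sum_distrib_left)
  ultimately show ?thesis by (simp add: mixed_strats_def)
qed

lemma row_marginal_product_strategy:
  assumes "v \<in> mixed_strats q" "1 \<le> i"
  shows "row_marginal q (product_strategy q u v) i = u i"
  using assms by (simp add: row_marginal_def product_strategy_pairing mixed_strats_def
      flip: sum_distrib_left)

lemma col_marginal_product_strategy:
  assumes "u \<in> mixed_strats p" "l \<in> {1..q}"
  shows "col_marginal p q (product_strategy q u v) l = v l"
  using assms by (simp add: col_marginal_def product_strategy_pairing mixed_strats_def
      flip: sum_distrib_right)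

definition is_product_payoff :: "nat \<Rightarrow> nat \<Rightarrow> nat \<Rightarrow> nat \<Rightarrow> (nat \<Rightarrow> nat \<Rightarrow> real)
    \<Rightarrow> (nat \<Rightarrow> nat \<Rightarrow> real) \<Rightarrow> (nat \<Rightarrow> nat \<Rightarrow> real) \<Rightarrow> bool" where
  "is_product_payoff n1 m1 n2 m2 M1 M2 M \<longleftrightarrow>
     (\<forall>i1\<in>{1..n1}. \<forall>i2\<in>{1..n2}. \<forall>j1\<in>{1..m1}. \<forall>j2\<in>{1..m2}.
        M (pairing n2 i1 i2) (pairing m2 j1 j2) = M1 i1 j1 + M2 i2 j2)"

lemma is_product_game_iff:
  "is_product_game n1 m1 n2 m2 A1 B1 A2 B2 A B \<longleftrightarrow>
     is_product_payoff n1 m1 n2 m2 A1 A2 A \<and> is_product_payoff n1 m1 n2 m2 B1 B2 B"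
  unfolding is_product_game_def is_product_payoff_def by blast

lemma bilin_product_payoff:
  assumes "is_product_payoff n1 m1 n2 m2 M1 M2 M"
  shows "bilin (n1 * n2) (m1 * m2) x M y
    = bilin n1 m1 (row_marginal n2 x) M1 (row_marginal m2 y)
      + bilin n2 m2 (col_marginal n1 n2 x) M2 (col_marginal m1 m2 y)"
proof -
  let ?P = "pairing n2" and ?Q = "pairing m2"
  have inner: "(\<Sum>j=1..m1. \<Sum>k=1..m2. M (?P i l) (?Q j k) * y (?Q j k))
      = (\<Sum>j=1..m1. row_marginal m2 y j * M1 i j)
        + (\<Sum>k=1..m2. col_marginal m1 m2 y k * M2 l k)"
    if "i \<in> {1..n1}" "l \<in> {1..n2}" for i l
    using assms that sum_pairing_separable[where p=m1 and q=m2 and x=y and a="M1 i" and b="M2 l"]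
    by (simp add: is_product_payoff_def mult.commute)
  have "bilin (n1 * n2) (m1 * m2) x M y
      = (\<Sum>i=1..n1. \<Sum>l=1..n2.
           x (?P i l) * (\<Sum>j=1..m1. \<Sum>k=1..m2. M (?P i l) (?Q j k) * y (?Q j k)))"
    unfolding bilin_def sum_pairing by (simp add: sum_distrib_left mult.assoc)
  also have "\<dots> = (\<Sum>i=1..n1. \<Sum>l=1..n2.
           x (?P i l) * ((\<Sum>j=1..m1. row_marginal m2 y j * M1 i j)
             + (\<Sum>k=1..m2. col_marginal m1 m2 y k * M2 l k)))"
    using inner by simp
  also have "\<dots> = (\<Sum>i=1..n1. row_marginal n2 x i * (\<Sum>j=1..m1. row_marginal m2 y j * M1 i j))
      + (\<Sum>l=1..n2. col_marginal n1 n2 x l * (\<Sum>k=1..m2. col_marginal m1 m2 y k * M2 l k))"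
    by (rule sum_pairing_separable)
  finally show ?thesis
    by (simp add: bilin_def sum_distrib_left ac_simps)
qed

lemma bilin_cong:
  assumes "\<And>i. i \<in> {1..n} \<Longrightarrow> x i = x' i" "\<And>j. j \<in> {1..m} \<Longrightarrow> y j = y' j"
  shows "bilin n m x M y = bilin n m x' M y'"
  using assms unfolding bilin_def by (intro sum.cong refl) auto

lemma bilin_product_strategy_left:
  assumes "is_product_payoff n1 m1 n2 m2 M1 M2 M"
    and "u \<in> mixed_strats n1" "v \<in> mixed_strats n2"
  shows "bilin (n1 * n2) (m1 * m2) (product_strategy n2 u v) M y
    = bilin n1 m1 u M1 (row_marginal m2 y) + bilin n2 m2 v M2 (col_marginal m1 m2 y)"
  unfolding bilin_product_payoff[OF assms(1)] using assms(2,3)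
  by (intro arg_cong2[where f="(+)"] bilin_cong)
    (simp_all add: row_marginal_product_strategy col_marginal_product_strategy)

lemma bilin_product_strategy_right:
  assumes "is_product_payoff n1 m1 n2 m2 M1 M2 M"
    and "u \<in> mixed_strats m1" "v \<in> mixed_strats m2"
  shows "bilin (n1 * n2) (m1 * m2) x M (product_strategy m2 u v)
    = bilin n1 m1 (row_marginal n2 x) M1 u + bilin n2 m2 (col_marginal n1 n2 x) M2 v"
  unfolding bilin_product_payoff[OF assms(1)] using assms(2,3)
  by (intro arg_cong2[where f="(+)"] bilin_cong)
    (simp_all add: row_marginal_product_strategy col_marginal_product_strategy)

theorem theorem3:
  fixes n1 m1 n2 m2 :: nat
    and A1 B1 A2 B2 A B :: "nat \<Rightarrow> nat \<Rightarrow> real"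
    and x y :: "nat \<Rightarrow> real"
  assumes "is_product_game n1 m1 n2 m2 A1 B1 A2 B2 A B"
    and "nash_eq (n1 * n2) (m1 * m2) A B x y"
  shows "nash_eq n1 m1 A1 B1
           (\<lambda>i. \<Sum>l=1..n2. x (pairing n2 i l))
           (\<lambda>j. \<Sum>l=1..m2. y (pairing m2 j l))"
proof -
  have A: "is_product_payoff n1 m1 n2 m2 A1 A2 A"
    and B: "is_product_payoff n1 m1 n2 m2 B1 B2 B"
    using assms(1) by (simp_all add: is_product_game_iff)
  have x: "x \<in> mixed_strats (n1 * n2)" and y: "y \<in> mixed_strats (m1 * m2)"
    and x_best: "\<And>x'. x' \<in> mixed_strats (n1 * n2) \<Longrightarrow>
      bilin (n1 * n2) (m1 * m2) x' A y \<le> bilin (n1 * n2) (m1 * m2) x A y"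
    and y_best: "\<And>y'. y' \<in> mixed_strats (m1 * m2) \<Longrightarrow>
      bilin (n1 * n2) (m1 * m2) x B y' \<le> bilin (n1 * n2) (m1 * m2) x B y"
    using assms(2) by (auto simp: nash_eq_def)
  have x2: "col_marginal n1 n2 x \<in> mixed_strats n2"
    and y2: "col_marginal m1 m2 y \<in> mixed_strats m2"
    using x y by (simp_all add: col_marginal_mixed)
  have "bilin n1 m1 u A1 (row_marginal m2 y)
      \<le> bilin n1 m1 (row_marginal n2 x) A1 (row_marginal m2 y)"
    if "u \<in> mixed_strats n1" for u
    using x_best[OF product_strategy_mixed[OF that x2]]
      bilin_product_strategy_left[OF A that x2, of y] bilin_product_payoff[OF A, of x y]
    by linarith
  moreover have "bilin n1 m1 (row_marginal n2 x) B1 v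
      \<le> bilin n1 m1 (row_marginal n2 x) B1 (row_marginal m2 y)"
    if "v \<in> mixed_strats m1" for v
    using y_best[OF product_strategy_mixed[OF that y2]]
      bilin_product_strategy_right[OF B that y2, of x] bilin_product_payoff[OF B, of x y]
    by linarith
  ultimately have "nash_eq n1 m1 A1 B1 (row_marginal n2 x) (row_marginal m2 y)"
    using x y by (simp add: nash_eq_def row_marginal_mixed)
  then show ?thesis by (simp only: row_marginal_def)
qed

end
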